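(* Let $X$ be an exponential vector space over a field $K$, and let $A$ and $B$ be two bases of $X\smallsetminus X_0$. Then for every $a\in A$ there exists exactly one $b_a\in B$ such that $L(a)=L(b_a)$.
   Context: An exponential vector space (evs) over a field $K$ is a partially ordered set $(X,\leq)$ with a binary operation $+$ on $X$ and a map $K\times X\to X$, $(\alpha,x)\mapsto \alpha x$, such that: (A1) $(X,+)$ is a commutative semigroup with identity $\theta$; (A2) $x\leq y$ implies $x+z\leq y+z$ and $\alpha x\leq \alpha y$ for all $z\in X$, $\alpha\in K$; (A3) $\alpha(x+y)=\alpha x+\alpha y$, $\alpha(\beta x)=(\alpha\beta)x$, $(\alpha+\beta)x\leq \alpha x+\beta x$, $1x=x$; (A4) $\alpha x=\theta$ iff $\alpha=0$ or $x=\theta$; (A5) $x+(-1)x=\theta$ iff $x\in X_0$, where $X_0:=\{z\in X: y\not\leq z \text{ for all } y\in X\smallsetminus\{z\}\}$ (the set of minimal elements, called the primitive space; it is a vector space over $K$); (A6) for each $x\in X$ there is $p\in X_0$ with $p\leq x$. For $x\in X\smallsetminus X_0$ let $L(x):=\{z\in X: z\geq \alpha x+p \text{ for some } \alpha\in K\smallsetminus\{0\},\ p\in X_0\}$. A subset $B\subseteq X\smallsetminus X_0$ generates $X\smallsetminus X_0$ if $X\smallsetminus X_0=\bigcup_{b\in B}L(b)$. Elements $x,y\in X\smallsetminus X_0$ are orderly dependent if $x\in L(y)$ or $y\in L(x)$, and orderly independent otherwise; $B\subseteq X\smallsetminus X_0$ is orderly independent if any two distinct members of $B$ are orderly independent.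 A basis of $X\smallsetminus X_0$ is an orderly independent subset of $X\smallsetminus X_0$ that generates $X\smallsetminus X_0$. *)

theory Defs
  imports Main
begin

definition primitive :: "('x \<Rightarrow> 'x \<Rightarrow> bool) \<Rightarrow> 'x set" where
  "primitive le = {z. \<forall>y. y \<noteq> z \<longrightarrow> \<not> le y z}"

definition evs ::
  "('x \<Rightarrow> 'x \<Rightarrow> bool) \<Rightarrow> ('x \<Rightarrow> 'x \<Rightarrow> 'x) \<Rightarrow> 'x \<Rightarrow> ('k::field \<Rightarrow> 'x \<Rightarrow> 'x) \<Rightarrow> bool" where
  "evs le add theta smul \<longleftrightarrow>
     \<comment> \<open>partial order\<close>
     (\<forall>x. le x x) \<and>
     (\<forall>x y. le x y \<and> le y x \<longrightarrow> x = y) \<and>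
     (\<forall>x y z. le x y \<and> le y z \<longrightarrow> le x z) \<and>
     \<comment> \<open>(A1)\<close>
     (\<forall>x y z. add (add x y) z = add x (add y z)) \<and>
     (\<forall>x y. add x y = add y x) \<and>
     (\<forall>x. add x theta = x) \<and>
     \<comment> \<open>(A2)\<close>
     (\<forall>x y z (\<alpha>::'k). le x y \<longrightarrow> le (add x z) (add y z) \<and> le (smul \<alpha> x) (smul \<alpha> y)) \<and>
     \<comment> \<open>(A3)\<close>
     (\<forall>(\<alpha>::'k) x y. smul \<alpha> (add x y) = add (smul \<alpha> x) (smul \<alpha> y)) \<and>
     (\<forall>(\<alpha>::'k) \<beta> x. smul \<alpha> (smul \<beta> x) = smul (\<alpha> * \<beta>) x) \<and>
     (\<forall>(\<alpha>::'k) \<beta> x. le (smul (\<alpha> + \<beta>) x) (add (smul \<alpha> x) (smul \<beta> x))) \<and>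
     (\<forall>x. smul (1::'k) x = x) \<and>
     \<comment> \<open>(A4)\<close>
     (\<forall>(\<alpha>::'k) x. smul \<alpha> x = theta \<longleftrightarrow> \<alpha> = 0 \<or> x = theta) \<and>
     \<comment> \<open>(A5)\<close>
     (\<forall>x. add x (smul (-1::'k) x) = theta \<longleftrightarrow> x \<in> primitive le) \<and>
     \<comment> \<open>(A6)\<close>
     (\<forall>x. \<exists>p \<in> primitive le. le p x)"

definition Lset ::
  "('x \<Rightarrow> 'x \<Rightarrow> bool) \<Rightarrow> ('x \<Rightarrow> 'x \<Rightarrow> 'x) \<Rightarrow> ('k::field \<Rightarrow> 'x \<Rightarrow> 'x) \<Rightarrow> 'x \<Rightarrow> 'x set" where
  "Lset le add smul x =
     {z. \<exists>(\<alpha>::'k) p. \<alpha> \<noteq> 0 \<and> p \<in> primitive le \<and> le (add (smul \<alpha> x) p) z}"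

definition generates ::
  "('x \<Rightarrow> 'x \<Rightarrow> bool) \<Rightarrow> ('x \<Rightarrow> 'x \<Rightarrow> 'x) \<Rightarrow> ('k::field \<Rightarrow> 'x \<Rightarrow> 'x) \<Rightarrow> 'x set \<Rightarrow> bool" where
  "generates le add smul B \<longleftrightarrow>
     B \<subseteq> - primitive le \<and> - primitive le = (\<Union>b\<in>B. Lset le add smul b)"

definition orderly_independent ::
  "('x \<Rightarrow> 'x \<Rightarrow> bool) \<Rightarrow> ('x \<Rightarrow> 'x \<Rightarrow> 'x) \<Rightarrow> ('k::field \<Rightarrow> 'x \<Rightarrow> 'x) \<Rightarrow> 'x set \<Rightarrow> bool" where
  "orderly_independent le add smul B \<longleftrightarrow>
     B \<subseteq> - primitive le \<and>
     (\<forall>x\<in>B. \<forall>y\<in>B. x \<noteq> y \<longrightarrow>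
        x \<notin> Lset le add smul y \<and> y \<notin> Lset le add smul x)"

definition is_basis ::
  "('x \<Rightarrow> 'x \<Rightarrow> bool) \<Rightarrow> ('x \<Rightarrow> 'x \<Rightarrow> 'x) \<Rightarrow> ('k::field \<Rightarrow> 'x \<Rightarrow> 'x) \<Rightarrow> 'x set \<Rightarrow> bool" where
  "is_basis le add smul B \<longleftrightarrow>
     orderly_independent le add smul B \<and> generates le add smul B"

end

theory Submission
  imports Defs
begin

text \<open>The sets \<open>L x\<close> behave like principal closures: \<open>x \<in> L x\<close>, and \<open>y \<in> L x\<close> implies
  \<open>L y \<subseteq> L x\<close>, because the primitive elements are closed under scaling and addition.
  Given \<open>a \<in> A\<close>, choose \<open>b \<in> B\<close> with \<open>a \<in> L b\<close> and then \<open>a' \<in> A\<close> with \<open>b \<in> L a'\<close>.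
  Then \<open>a \<in> L a'\<close>, so \<open>a' = a\<close> by orderly independence of \<open>A\<close>, whence \<open>L a = L b\<close>.
  If also \<open>L a = L b'\<close> with \<open>b' \<in> B\<close>, then \<open>b' \<in> L b\<close>, so \<open>b' = b\<close> by independence of \<open>B\<close>.\<close>

lemma orderly_independent_not_primitive:
  "orderly_independent le add smul B \<Longrightarrow> b \<in> B \<Longrightarrow> b \<notin> primitive le"
  unfolding orderly_independent_def by blast

lemma orderly_independentD:
  assumes "orderly_independent le add smul B" and "x \<in> B" and "y \<in> B"
    and "x \<in> Lset le add smul y"
  shows "x = y"
  using assms unfolding orderly_independent_def by blast

lemma generatesE:
  assumes "generates le add smul B" and "x \<notin> primitive le"
  obtains b where "b \<in> B" and "x \<in> Lset le add smul b"
  using assms unfolding generates_def by blast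

locale exp_vector_space =
  fixes le :: "'x \<Rightarrow> 'x \<Rightarrow> bool" and add :: "'x \<Rightarrow> 'x \<Rightarrow> 'x" and theta :: 'x
    and smul :: "'k::field \<Rightarrow> 'x \<Rightarrow> 'x"
  assumes evs: "evs le add theta smul"
begin

lemma
  shows evs_le_refl: "le x x"
    and evs_le_trans: "le x y \<Longrightarrow> le y z \<Longrightarrow> le x z"
    and evs_add_assoc: "add (add x y) z = add x (add y z)"
    and evs_add_commute: "add x y = add y x"
    and evs_add_theta: "add x theta = x"
    and evs_add_mono: "le x y \<Longrightarrow> le (add x z) (add y z)"
    and evs_smul_mono: "le x y \<Longrightarrow> le (smul \<alpha> x) (smul \<alpha> y)"
    and evs_smul_add: "smul \<alpha> (add x y) = add (smul \<alpha> x) (smul \<alpha> y)"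
    and evs_smul_smul: "smul \<alpha> (smul \<beta> x) = smul (\<alpha> * \<beta>) x"
    and evs_smul_one: "smul 1 x = x"
    and evs_smul_eq_theta_iff: "smul \<alpha> x = theta \<longleftrightarrow> \<alpha> = 0 \<or> x = theta"
    and evs_primitive_iff: "x \<in> primitive le \<longleftrightarrow> add x (smul (-1) x) = theta"
  using evs unfolding evs_def by (elim conjE; metis)+

lemma smul_theta: "smul \<alpha> theta = theta"
  by (simp add: evs_smul_eq_theta_iff)

lemma theta_primitive: "theta \<in> primitive le"
  by (simp add: evs_primitive_iff smul_theta evs_add_theta)

lemma smul_primitive:
  assumes "p \<in> primitive le"
  shows "smul \<beta> p \<in> primitive le"
proof -
  have "add (smul \<beta> p) (smul (-1) (smul \<beta> p)) = smul \<beta> (add p (smul (-1) p))"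
    by (simp only: evs_smul_add evs_smul_smul mult.commute)
  also have "\<dots> = theta"
    using assms by (simp add: evs_primitive_iff smul_theta)
  finally show ?thesis by (simp add: evs_primitive_iff)
qed

lemma add_primitive:
  assumes "p \<in> primitive le" and "q \<in> primitive le"
  shows "add p q \<in> primitive le"
proof -
  have "add (add p q) (smul (-1) (add p q))
      = add (add p (smul (-1) p)) (add q (smul (-1) q))"
    by (simp only: evs_smul_add evs_add_assoc evs_add_commute[of q])
  also have "\<dots> = theta"
    using assms by (simp add: evs_primitive_iff evs_add_theta)
  finally show ?thesis by (simp add: evs_primitive_iff)
qed

lemma Lset_self: "x \<in> Lset le add smul x"
proof -
  have "le (add (smul 1 x) theta) x"
    by (simp add: evs_smul_one evs_add_theta evs_le_refl)
  then show ?thesis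
    unfolding Lset_def using theta_primitive by (intro CollectI exI[of _ 1]) auto
qed

lemma Lset_subset:
  assumes "y \<in> Lset le add smul x"
  shows "Lset le add smul y \<subseteq> Lset le add smul x"
proof
  fix z assume "z \<in> Lset le add smul y"
  then obtain \<beta> q where \<beta>: "\<beta> \<noteq> 0" and q: "q \<in> primitive le"
    and yz: "le (add (smul \<beta> y) q) z"
    unfolding Lset_def by blast
  obtain \<alpha> p where \<alpha>: "\<alpha> \<noteq> 0" and p: "p \<in> primitive le"
    and xy: "le (add (smul \<alpha> x) p) y"
    using assms unfolding Lset_def by blast
  have "add (smul \<beta> (add (smul \<alpha> x) p)) q = add (smul (\<beta> * \<alpha>) x) (add (smul \<beta> p) q)"
    by (simp only: evs_add_assoc evs_smul_add evs_smul_smul)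
  then have "le (add (smul (\<beta> * \<alpha>) x) (add (smul \<beta> p) q)) z"
    using evs_le_trans[OF evs_add_mono[OF evs_smul_mono[OF xy]] yz] by simp
  moreover have "add (smul \<beta> p) q \<in> primitive le"
    using add_primitive[OF smul_primitive[OF p] q] .
  moreover have "\<beta> * \<alpha> \<noteq> 0"
    using \<alpha> \<beta> by simp
  ultimately show "z \<in> Lset le add smul x"
    unfolding Lset_def by blast
qed

lemma orderly_independent_Lset_inj:
  assumes "orderly_independent le add smul B" and "b \<in> B" and "b' \<in> B"
    and "Lset le add smul b = Lset le add smul b'"
  shows "b = b'"
  using orderly_independentD[OF assms(1,2,3)] Lset_self[of b] assms(4) by simp

lemma Lset_eq_if_mem_Lset:
  assumes basis: "is_basis le add smul A" and "a \<in> A"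
    and "b \<notin> primitive le" and ab: "a \<in> Lset le add smul b"
  shows "Lset le add smul a = Lset le add smul b"
proof -
  from basis have indep: "orderly_independent le add smul A"
    and gen: "generates le add smul A"
    by (simp_all add: is_basis_def)
  obtain a' where "a' \<in> A" and ba': "b \<in> Lset le add smul a'"
    using generatesE[OF gen \<open>b \<notin> primitive le\<close>] .
  moreover have "a \<in> Lset le add smul a'"
    using Lset_subset[OF ba'] ab by blast
  ultimately have "a = a'"
    using orderly_independentD[OF indep \<open>a \<in> A\<close>] by blast
  then show ?thesis
    using Lset_subset[OF ab] Lset_subset[OF ba'] by blast
qed

end

theorem mainTheorem16:
  fixes le :: "'x \<Rightarrow> 'x \<Rightarrow> bool" and add :: "'x \<Rightarrow> 'x \<Rightarrow> 'x" and theta :: 'x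
    and smul :: "'k::field \<Rightarrow> 'x \<Rightarrow> 'x" and A B :: "'x set"
  assumes "evs le add theta smul"
    and "is_basis le add smul A"
    and "is_basis le add smul B"
  shows "\<forall>a\<in>A. \<exists>!b. b \<in> B \<and> Lset le add smul a = Lset le add smul b"
proof
  interpret exp_vector_space le add theta smul
    by (rule exp_vector_space.intro) (rule assms(1))
  from assms(2,3) have indep_A: "orderly_independent le add smul A"
    and indep_B: "orderly_independent le add smul B" and gen_B: "generates le add smul B"
    by (simp_all add: is_basis_def)
  fix a assume "a \<in> A"
  obtain b where "b \<in> B" and ab: "a \<in> Lset le add smul b"
    using generatesE[OF gen_B orderly_independent_not_primitive[OF indep_A \<open>a \<in> A\<close>]] .
  have Lab: "Lset le add smul a = Lset le add smul b"
    using Lset_eq_if_mem_Lset[OF assms(2) \<open>a \<in> A\<close>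
        orderly_independent_not_primitive[OF indep_B \<open>b \<in> B\<close>] ab] .
  show "\<exists>!b. b \<in> B \<and> Lset le add smul a = Lset le add smul b"
  proof (rule ex1I[of _ b])
    fix b' assume "b' \<in> B \<and> Lset le add smul a = Lset le add smul b'"
    with Lab show "b' = b"
      using orderly_independent_Lset_inj[OF indep_B _ \<open>b \<in> B\<close>, of b'] by simp
  qed (use \<open>b \<in> B\<close> Lab in simp)
qed

end
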